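(* Let $s<d$. For each $M\in\mathbb{N}$ let $\alpha_1,\dots,\alpha_M>0$ and let $B_1,\dots,B_M\in\mathbb{R}^{s\times d}$ be random matrices with all entries independent, $[B_m]_{i,j}\sim\mathcal{N}(0,1/\alpha_m)$ for $i\ne j$ and $[B_m]_{i,i}\sim\mathcal{N}(1/\sqrt{\alpha_m},1/\alpha_m)$. Consider the server model $y=\frac{1}{M}\sum_{m=1}^M B_m\sqrt{\alpha_m}g_m^{sp}(\theta)+\gamma$ with random operator $L_M=\frac{1}{M}(\sqrt{\alpha_1}B_1,\dots,\sqrt{\alpha_M}B_M)$, and the eavesdropper model $y_E=\frac{1}{M}\sum_{m=1}^M H_{E_m}B_m\sqrt{\alpha_m}g_m^{sp}(\theta)+\gamma$ with random operator $L_{E,M}=\frac{1}{M}(\sqrt{\alpha_1}H_{E_1}B_1,\dots,\sqrt{\alpha_M}H_{E_M}B_M)$, where $H_{E_m}\in\mathbb{R}^{s\times s}$ are random matrices with no assumption on their distribution. If for every $M\in\mathbb{N}$ $$\mathbb{E}[\operatorname{cond}(H_{E_1}(C_1+I_{s\times d}),\dots,H_{E_M}(C_M+I_{s\times d}))]>\mathbb{E}[\operatorname{cond}(C_1+I_{s\times d},\dots,C_M+I_{s\times d})],$$ where $C_1,\dots,C_M\in\mathbb{R}^{s\times d}$ have independent $\mathcal{N}(0,1)$ entries, then the server model is inverse secure with respect to the eavesdropper model, i.e. $\mathbb{E}[\operatorname{cond}(L_{E,M})]>\mathbb{E}[\operatorname{cond}(L_M)]$ for all $M\in\mathbb{N}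$.
   Context: For a matrix $X$ with $s$ rows and at least $s$ columns, $\operatorname{cond}(X)=\sigma_1(X)/\sigma_s(X)$, the ratio of its largest and $s$-th largest singular values. $I_{s\times d}$ is the $s\times d$ matrix with ones on the main diagonal and zeros elsewhere; $(X_1,\dots,X_M)$ denotes horizontal concatenation. The vectors $g_m^{sp}(\theta)\in\mathbb{R}^d$ are users' sparsified gradients and $\gamma$ is additive Gaussian noise. A server model with random operator $L_M$ is inverse secure with respect to an eavesdropper model with random operator $L_{E,M}$ if $\mathbb{E}[\operatorname{cond}(L_{E,M})]>\mathbb{E}[\operatorname{cond}(L_M)]$ for all $M\in\mathbb{N}$. *)

theory Defs
  imports "HOL-Probability.Probability" "Jordan_Normal_Form.Matrix" "Jordan_Normal_Form.Char_Poly"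
begin

(* singular values of a real matrix X with s rows (s <= number of columns):
   sigma X k = k-th largest singular value (k = 1..s), i.e. the square root of the
   k-th largest eigenvalue (with multiplicity) of X X^T *)
definition singular_value :: "real mat \<Rightarrow> nat \<Rightarrow> real" where
  "singular_value X k =
     sqrt (rev (sorted_list_of_multiset (proots (char_poly (X * transpose_mat X)))) ! (k - 1))"

definition cond :: "real mat \<Rightarrow> ennreal" where
  "cond X = (if singular_value X (dim_row X) = 0 then \<infinity>
             else ennreal (singular_value X 1 / singular_value X (dim_row X)))"

definition rect_id :: "nat \<Rightarrow> nat \<Rightarrow> real mat" where
  "rect_id s d = mat s d (\<lambda>(i, j). if i = j then 1 else 0)"

(* horizontal concatenation (X 1, ..., X M) of s x d matrices *)
definition hcat :: "nat \<Rightarrow> nat \<Rightarrow> nat \<Rightarrow> (nat \<Rightarrow> real mat) \<Rightarrow> real mat" where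
  "hcat s d M X = mat s (M * d) (\<lambda>(i, j). X (j div d + 1) $$ (i, j mod d))"

end

theory Submission
  imports Defs "Jordan_Normal_Form.Jordan_Normal_Form_Existence"
begin

(* The condition number is invariant under multiplication by a positive scalar, and
   C_m + I = sqrt(alpha_m) B_m.  Hence L_M and L_{E,M} are 1/M times the concatenations
   appearing in the hypothesis, so the hypothesis is literally the claim.

   Scale invariance holds because the eigenvalues of (cX)(cX)^T = c^2 XX^T are c^2 times those
   of XX^T.  As singular values are read off by position in the sorted list of real roots of
   the characteristic polynomial, this list must also have full length, i.e. the symmetric
   matrix XX^T must have only real eigenvalues. *)

lemma sorted_list_of_multiset_image_mset_mono:
  fixes f :: "'a :: linorder \<Rightarrow> 'b :: linorder"
  assumes "mono f"
  shows "sorted_list_of_multiset (image_mset f M) = map f (sorted_list_of_multiset M)"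
proof -
  have "sorted (map f (sorted_list_of_multiset M))"
    using assms by (auto simp: sorted_map monoD intro: sorted_wrt_mono_rel[OF _ sorted_sorted_list_of_multiset])
  moreover have "image_mset f M = mset (map f (sorted_list_of_multiset M))" by simp
  ultimately show ?thesis by (metis sorted_list_of_multiset_mset sorted_sort_id)
qed

lemma count_image_mset_inj:
  assumes "inj f"
  shows "count (image_mset f M) (f x) = count M x"
proof -
  have "f -` {f x} = {x}" using assms by (auto dest: injD)
  then show ?thesis by (cases "x \<in># M") (auto simp: count_image_mset not_in_iff)
qed

(* The scaling law for root multiplicities is only available for complex matrices
   (via Jordan normal forms), hence the detour through complex_of_real. *)
lemma proots_char_poly_smult:
  fixes A :: "real mat"
  assumes A: "A \<in> carrier_mat n n" and k: "k \<noteq> 0"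
  shows "proots (char_poly (k \<cdot>\<^sub>m A)) = image_mset ((*) k) (proots (char_poly A))"
proof (rule multiset_eqI)
  fix y
  interpret of_real_poly: map_poly_inj_idom_divide_hom complex_of_real by unfold_locales auto
  have kA: "k \<cdot>\<^sub>m A \<in> carrier_mat n n" using A by simp
  have nonzero: "char_poly A \<noteq> 0" "char_poly (k \<cdot>\<^sub>m A) \<noteq> 0"
    using degree_monic_char_poly[OF A] degree_monic_char_poly[OF kA] by auto
  have "count (image_mset ((*) k) (proots (char_poly A))) y = count (proots (char_poly A)) (y / k)"
    using count_image_mset_inj[of "(*) k" _ "y / k"] k by (simp add: inj_def)
  also have "\<dots> = order (complex_of_real (y / k)) (char_poly (map_mat complex_of_real A))"
    using nonzero by (auto simp: of_real_hom.char_poly_hom[OF A] of_real_poly.order_hom simp del: of_real_divide)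
  also have "\<dots> = order (complex_of_real y) (char_poly (complex_of_real k \<cdot>\<^sub>m map_mat complex_of_real A))"
    using order_char_poly_smult[of "map_mat complex_of_real A" n "complex_of_real k"] A k by simp
  also have "complex_of_real k \<cdot>\<^sub>m map_mat complex_of_real A = map_mat complex_of_real (k \<cdot>\<^sub>m A)"
    by (rule eq_matI) auto
  also have "order (complex_of_real y) (char_poly \<dots>) = count (proots (char_poly (k \<cdot>\<^sub>m A))) y"
    using nonzero by (auto simp: of_real_hom.char_poly_hom[OF kA] of_real_poly.order_hom)
  finally show "count (proots (char_poly (k \<cdot>\<^sub>m A))) y = count (image_mset ((*) k) (proots (char_poly A))) y"
    by simp
qed

lemma eigenvalue_real_symmetric_in_Reals:
  fixes A :: "real mat"
  assumes A: "A \<in> carrier_mat n n" and sym: "transpose_mat A = A"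
    and ev: "eigenvalue (map_mat complex_of_real A) a"
  shows "a \<in> \<real>"
proof -
  let ?A = "map_mat complex_of_real A"
  have A': "?A \<in> carrier_mat n n" and sym': "transpose_mat ?A = ?A"
    using A sym by (auto simp: map_mat_transpose)
  from ev obtain v where v: "v \<in> carrier_vec n" "v \<noteq> 0\<^sub>v n" "?A *\<^sub>v v = a \<cdot>\<^sub>v v"
    unfolding eigenvalue_def eigenvector_def using A by auto
  have conjugate_Av: "conjugate (?A *\<^sub>v v) = ?A *\<^sub>v conjugate v"
    by (rule eq_vecI) (use A v(1) in \<open>auto simp: scalar_prod_def cnj_sum\<close>)
  have "a * (v \<bullet>c v) = (?A *\<^sub>v v) \<bullet>c v"
    using v by simp
  also have "\<dots> = (transpose_mat ?A *\<^sub>v v) \<bullet> conjugate v"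
    by (simp only: sym')
  also have "\<dots> = v \<bullet> conjugate (?A *\<^sub>v v)"
    unfolding conjugate_Av by (rule transpose_vec_mult_scalar[OF A']) (use v in auto)
  also have "\<dots> = cnj a * (v \<bullet>c v)"
    using v by (simp add: conjugate_smult_vec)
  finally have "a * (v \<bullet>c v) = cnj a * (v \<bullet>c v)" .
  moreover have "v \<bullet>c v \<noteq> 0"
    using v by simp
  ultimately show ?thesis
    by (simp add: Reals_cnj_iff)
qed

lemma proots_prod_list_linear_factors:
  "proots (\<Prod>a\<leftarrow>as. [:- a, 1:]) = mset (as :: 'a :: idom list)"
proof (induction as)
  case (Cons a as)
  have "(\<Prod>a\<leftarrow>as. [:- a, 1:]) \<noteq> 0" by (auto simp: prod_list_zero_iff)
  with Cons show ?case by (simp add: proots_mult del: mult_pCons_left)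
qed simp

lemma size_proots_char_poly_symmetric:
  fixes A :: "real mat"
  assumes A: "A \<in> carrier_mat n n" and sym: "transpose_mat A = A"
  shows "size (proots (char_poly A)) = n"
proof -
  interpret of_real_poly: map_poly_inj_idom_divide_hom complex_of_real by unfold_locales auto
  let ?A = "map_mat complex_of_real A"
  have A': "?A \<in> carrier_mat n n" using A by simp
  obtain as where factored: "char_poly ?A = (\<Prod>a\<leftarrow>as. [:- a, 1:])" and "length as = n"
    using char_poly_factorized[OF A'] by blast
  have nonzero: "char_poly A \<noteq> 0" "char_poly ?A \<noteq> 0"
    using degree_monic_char_poly[OF A] degree_monic_char_poly[OF A'] by auto
  have roots: "proots (char_poly ?A) = mset as"
    unfolding factored by (rule proots_prod_list_linear_factors)
  have "a \<in> \<real>" if "a \<in> set as" for a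
  proof (rule eigenvalue_real_symmetric_in_Reals[OF A sym])
    have "a \<in># proots (char_poly ?A)" using that roots by simp
    then show "eigenvalue ?A a" using nonzero by (simp add: eigenvalue_root_char_poly[OF A'])
  qed
  then have as: "as = map complex_of_real (map Re as)"
    by (auto intro: nth_equalityI simp: Reals_def)
  have "proots (char_poly A) = mset (map Re as)"
  proof (rule multiset_eqI)
    fix x
    have "count (proots (char_poly A)) x = order (complex_of_real x) (char_poly ?A)"
      using nonzero by (simp add: of_real_hom.char_poly_hom[OF A] of_real_poly.order_hom)
    also have "\<dots> = count (mset as) (complex_of_real x)"
      using nonzero(2) roots by (metis count_proots)
    also have "mset as = image_mset complex_of_real (mset (map Re as))"
      using as by (metis mset_map)
    also have "count \<dots> (complex_of_real x) = count (mset (map Re as)) x"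
      by (rule count_image_mset_inj) (auto simp: inj_def)
    finally show "count (proots (char_poly A)) x = count (mset (map Re as)) x" .
  qed
  with \<open>length as = n\<close> show ?thesis by simp
qed

lemma singular_value_smult:
  fixes X :: "real mat"
  assumes X: "X \<in> carrier_mat n m" and c: "c > 0" and k: "1 \<le> k" "k \<le> n"
  shows "singular_value (c \<cdot>\<^sub>m X) k = c * singular_value X k"
proof -
  let ?G = "X * transpose_mat X"
  have G: "?G \<in> carrier_mat n n" using X by simp
  have sym: "transpose_mat ?G = ?G"
    using X by (simp add: transpose_mult[of X n m "transpose_mat X" n])
  have gram: "(c \<cdot>\<^sub>m X) * transpose_mat (c \<cdot>\<^sub>m X) = (c * c) \<cdot>\<^sub>m ?G"
    by (rule eq_matI) (use X in \<open>auto simp: scalar_prod_def sum_distrib_left ac_simps\<close>)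
  have roots: "proots (char_poly ((c * c) \<cdot>\<^sub>m ?G)) = image_mset ((*) (c * c)) (proots (char_poly ?G))"
    by (rule proots_char_poly_smult[OF G]) (use c in simp)
  have mono: "mono ((*) (c * c))" using c by (auto intro: monoI mult_left_mono)
  define L where "L = sorted_list_of_multiset (proots (char_poly ?G))"
  have "length L = n"
    using size_proots_char_poly_symmetric[OF G sym] unfolding L_def
    by (metis mset_sorted_list_of_multiset size_mset)
  have "singular_value (c \<cdot>\<^sub>m X) k = sqrt (rev (map ((*) (c * c)) L) ! (k - 1))"
    unfolding singular_value_def gram roots sorted_list_of_multiset_image_mset_mono[OF mono] L_def ..
  also have "\<dots> = c * sqrt (rev L ! (k - 1))"
    using k \<open>length L = n\<close> c by (simp add: rev_map real_sqrt_mult)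
  also have "\<dots> = c * singular_value X k" unfolding singular_value_def L_def ..
  finally show ?thesis .
qed

lemma cond_smult:
  assumes X: "X \<in> carrier_mat n m" and c: "c > 0" and "n > 0"
  shows "cond (c \<cdot>\<^sub>m X) = cond X"
  using singular_value_smult[OF X c, of 1] singular_value_smult[OF X c, of n] X assms
  by (auto simp: cond_def)

lemma hcat_carrier: "hcat s d M X \<in> carrier_mat s (M * d)"
  unfolding hcat_def by simp

lemma hcat_cong:
  assumes "\<And>m. 1 \<le> m \<Longrightarrow> m \<le> M \<Longrightarrow> X m = Y m"
  shows "hcat s d M X = hcat s d M Y"
  unfolding hcat_def by (rule eq_matI) (auto simp: assms less_mult_imp_div_less Suc_leI)

theorem proposition5:
  fixes P :: "'w measure"
    and s d :: nat
    and \<alpha> :: "nat \<Rightarrow> real"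
    and B H C :: "nat \<Rightarrow> 'w \<Rightarrow> real mat"
  assumes "prob_space P"
    and "0 < s" and "s < d"
    and alpha_pos: "\<And>m. m \<ge> 1 \<Longrightarrow> \<alpha> m > 0"
    and B_dim: "\<And>m \<omega>. m \<ge> 1 \<Longrightarrow> \<omega> \<in> space P \<Longrightarrow> B m \<omega> \<in> carrier_mat s d"
    and H_dim: "\<And>m \<omega>. m \<ge> 1 \<Longrightarrow> \<omega> \<in> space P \<Longrightarrow> H m \<omega> \<in> carrier_mat s s"
    and H_rv: "\<And>m i j. m \<ge> 1 \<Longrightarrow> i < s \<Longrightarrow> j < s \<Longrightarrow>
                 (\<lambda>\<omega>. H m \<omega> $$ (i, j)) \<in> borel_measurable P"
    and B_indep: "prob_space.indep_vars P (\<lambda>_. borel)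
                    (\<lambda>(m, i, j) \<omega>. B m \<omega> $$ (i, j)) {(m, i, j). m \<ge> 1 \<and> i < s \<and> j < d}"
    and B_offdiag: "\<And>m i j. m \<ge> 1 \<Longrightarrow> i < s \<Longrightarrow> j < d \<Longrightarrow> i \<noteq> j \<Longrightarrow>
                 distributed P lborel (\<lambda>\<omega>. B m \<omega> $$ (i, j)) (normal_density 0 (sqrt (1 / \<alpha> m)))"
    and B_diag: "\<And>m i. m \<ge> 1 \<Longrightarrow> i < s \<Longrightarrow>
                 distributed P lborel (\<lambda>\<omega>. B m \<omega> $$ (i, i))
                   (normal_density (1 / sqrt (\<alpha> m)) (sqrt (1 / \<alpha> m)))"
    and C_def: "\<And>m \<omega>. m \<ge> 1 \<Longrightarrow> \<omega> \<in> space P \<Longrightarrow>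
                 C m \<omega> = sqrt (\<alpha> m) \<cdot>\<^sub>m B m \<omega> - rect_id s d"
    and hyp: "\<And>M. M \<ge> 1 \<Longrightarrow>
                 (\<integral>\<^sup>+ \<omega>. cond (hcat s d M (\<lambda>m. H m \<omega> * (C m \<omega> + rect_id s d))) \<partial>P)
               > (\<integral>\<^sup>+ \<omega>. cond (hcat s d M (\<lambda>m. C m \<omega> + rect_id s d)) \<partial>P)"
  shows "\<forall>M \<ge> 1.
           (\<integral>\<^sup>+ \<omega>. cond ((1 / real M) \<cdot>\<^sub>m hcat s d M (\<lambda>m. sqrt (\<alpha> m) \<cdot>\<^sub>m (H m \<omega> * B m \<omega>))) \<partial>P)
         > (\<integral>\<^sup>+ \<omega>. cond ((1 / real M) \<cdot>\<^sub>m hcat s d M (\<lambda>m. sqrt (\<alpha> m) \<cdot>\<^sub>m B m \<omega>)) \<partial>P)"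
proof -
  have scaled_B: "C m \<omega> + rect_id s d = sqrt (\<alpha> m) \<cdot>\<^sub>m B m \<omega>" if "m \<ge> 1" "\<omega> \<in> space P" for m \<omega>
    using C_def[OF that] B_dim[OF that] by (auto intro!: eq_matI simp: rect_id_def)
  have H_scaled_B: "H m \<omega> * (sqrt (\<alpha> m) \<cdot>\<^sub>m B m \<omega>) = sqrt (\<alpha> m) \<cdot>\<^sub>m (H m \<omega> * B m \<omega>)"
    if "m \<ge> 1" "\<omega> \<in> space P" for m \<omega>
    using H_dim[OF that] B_dim[OF that] by (rule mult_smult_distrib)
  have cond_scaled_hcat: "cond ((1 / real M) \<cdot>\<^sub>m hcat s d M X) = cond (hcat s d M X)"
    if "M \<ge> 1" for M X
    by (rule cond_smult[OF hcat_carrier]) (use that \<open>0 < s\<close> in auto)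
  have eavesdropper:
    "(\<integral>\<^sup>+ \<omega>. cond ((1 / real M) \<cdot>\<^sub>m hcat s d M (\<lambda>m. sqrt (\<alpha> m) \<cdot>\<^sub>m (H m \<omega> * B m \<omega>))) \<partial>P)
     = (\<integral>\<^sup>+ \<omega>. cond (hcat s d M (\<lambda>m. H m \<omega> * (C m \<omega> + rect_id s d))) \<partial>P)" if "M \<ge> 1" for M
    using that by (intro nn_integral_cong)
      (auto simp: cond_scaled_hcat scaled_B H_scaled_B intro!: arg_cong[of _ _ cond] hcat_cong)
  have server:
    "(\<integral>\<^sup>+ \<omega>. cond ((1 / real M) \<cdot>\<^sub>m hcat s d M (\<lambda>m. sqrt (\<alpha> m) \<cdot>\<^sub>m B m \<omega>)) \<partial>P)
     = (\<integral>\<^sup>+ \<omega>. cond (hcat s d M (\<lambda>m. C m \<omega> + rect_id s d)) \<partial>P)" if "M \<ge> 1" for M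
    using that by (intro nn_integral_cong)
      (auto simp: cond_scaled_hcat scaled_B intro!: arg_cong[of _ _ cond] hcat_cong)
  show ?thesis
    using hyp by (simp add: eavesdropper server)
qed

end
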